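(* Let $\eta>1$ and $\epsilon>0$. If a distribution $\mu$ over $\{-1,+1\}^n$ is $(\eta,\epsilon)$-completely spectrally independent, then for every $0<\alpha\le1/(2\eta)$ and every $x\in\left(0,(1+\epsilon)^{1/\alpha}\right]^n$ we have $F_{\mu,\alpha}(x)\le1$, where $$F_{\mu,\alpha}(z_1,\dots,z_n)=\frac{g_\mu(z_1^\alpha,\dots,z_n^\alpha)^{1/\alpha}}{\prod_{i=1}^n(\mu_i(+1)z_i+\mu_i(-1))}.$$
   Context: $g_\mu(z)=\sum_{\sigma\in\{-1,+1\}^n}\mu(\sigma)\prod_{i:\sigma_i=+1}z_i$; $\mu_i$ is the marginal at coordinate $i$. $(\boldsymbol\lambda*\mu)(\sigma)\propto\mu(\sigma)\prod_{i:\sigma_i=+1}\lambda_i$. $\mu$ is $(\eta,\epsilon)$-completely spectrally independent if $(\boldsymbol\lambda*\mu)$ is $\eta$-spectrally independent for every $\boldsymbol\lambda\in(0,1+\epsilon]^n$. A distribution $\nu$ is $\eta$-spectrally independent if for every $\Lambda\subseteq[n]$ and every $\sigma$ in the support of the marginal $\nu_\Lambda$, the spectral radius of the matrix $\Psi_{\nu^\sigma}(i,j)=\max_{x,y}d_{\mathrm{TV}}(\nu_j^{\sigma\wedge i\gets x},\nu_j^{\sigma\wedge i\gets y})$ (max over $x,y$ in the support of $\nu^\sigma_i$) is at most $\eta$; here $\nu^\sigma$ is $\nu$ conditioned on $\sigma$ and $\nu^{\sigma\wedge i\gets x}$ is further conditioned on coordinate $i$ equal to $x$. *)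

theory Defs
  imports Complex_Main "Jordan_Normal_Form.Spectral_Radius"
begin

text \<open>Coordinates are 0..n-1; a spin configuration sigma in {-1,+1}^n is encoded as
  a predicate sigma :: nat => bool (True = +1, False = -1) that is False outside {0..<n}.\<close>

definition cube :: "nat \<Rightarrow> (nat \<Rightarrow> bool) set" where
  "cube n = {\<sigma>. \<forall>i. n \<le> i \<longrightarrow> \<not> \<sigma> i}"

definition is_distr :: "nat \<Rightarrow> ((nat \<Rightarrow> bool) \<Rightarrow> real) \<Rightarrow> bool" where
  "is_distr n \<mu> \<longleftrightarrow> (\<forall>\<sigma>\<in>cube n. 0 \<le> \<mu> \<sigma>) \<and> (\<Sum>\<sigma>\<in>cube n. \<mu> \<sigma>) = 1"

definition gpoly :: "nat \<Rightarrow> ((nat \<Rightarrow> bool) \<Rightarrow> real) \<Rightarrow> (nat \<Rightarrow> real) \<Rightarrow> real" where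
  "gpoly n \<mu> z = (\<Sum>\<sigma>\<in>cube n. \<mu> \<sigma> * (\<Prod>i\<in>{i. i < n \<and> \<sigma> i}. z i))"

definition marg :: "nat \<Rightarrow> ((nat \<Rightarrow> bool) \<Rightarrow> real) \<Rightarrow> nat \<Rightarrow> bool \<Rightarrow> real" where
  "marg n \<mu> i b = (\<Sum>\<sigma>\<in>{\<sigma>\<in>cube n. \<sigma> i = b}. \<mu> \<sigma>)"

definition tilt :: "nat \<Rightarrow> (nat \<Rightarrow> real) \<Rightarrow> ((nat \<Rightarrow> bool) \<Rightarrow> real) \<Rightarrow> (nat \<Rightarrow> bool) \<Rightarrow> real" where
  "tilt n lam \<mu> \<sigma> = \<mu> \<sigma> * (\<Prod>i\<in>{i. i < n \<and> \<sigma> i}. lam i) /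
     (\<Sum>\<rho>\<in>cube n. \<mu> \<rho> * (\<Prod>i\<in>{i. i < n \<and> \<rho> i}. lam i))"

text \<open>A partial configuration (pinning) is given by a set Lam of coordinates and values tau on Lam.\<close>
definition agrees :: "nat set \<Rightarrow> (nat \<Rightarrow> bool) \<Rightarrow> (nat \<Rightarrow> bool) \<Rightarrow> bool" where
  "agrees Lam \<tau> \<sigma> \<longleftrightarrow> (\<forall>i\<in>Lam. \<sigma> i = \<tau> i)"

definition pinprob :: "nat \<Rightarrow> ((nat \<Rightarrow> bool) \<Rightarrow> real) \<Rightarrow> nat set \<Rightarrow> (nat \<Rightarrow> bool) \<Rightarrow> real" where
  "pinprob n \<nu> Lam \<tau> = (\<Sum>\<sigma>\<in>{\<sigma>\<in>cube n. agrees Lam \<tau> \<sigma>}. \<nu> \<sigma>)"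

definition cond :: "nat \<Rightarrow> ((nat \<Rightarrow> bool) \<Rightarrow> real) \<Rightarrow> nat set \<Rightarrow> (nat \<Rightarrow> bool) \<Rightarrow> (nat \<Rightarrow> bool) \<Rightarrow> real" where
  "cond n \<nu> Lam \<tau> \<sigma> = (if agrees Lam \<tau> \<sigma> then \<nu> \<sigma> / pinprob n \<nu> Lam \<tau> else 0)"

definition tv_marg :: "nat \<Rightarrow> ((nat \<Rightarrow> bool) \<Rightarrow> real) \<Rightarrow> ((nat \<Rightarrow> bool) \<Rightarrow> real) \<Rightarrow> nat \<Rightarrow> real" where
  "tv_marg n \<nu>1 \<nu>2 j = (\<bar>marg n \<nu>1 j True - marg n \<nu>2 j True\<bar>
                          + \<bar>marg n \<nu>1 j False - marg n \<nu>2 j False\<bar>) / 2"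

definition infl :: "nat \<Rightarrow> ((nat \<Rightarrow> bool) \<Rightarrow> real) \<Rightarrow> nat set \<Rightarrow> (nat \<Rightarrow> bool) \<Rightarrow> nat \<Rightarrow> nat \<Rightarrow> real" where
  "infl n \<nu> Lam \<tau> i j =
     (let S = {b. 0 < marg n (cond n \<nu> Lam \<tau>) i b} in
      Max {tv_marg n (cond n \<nu> (insert i Lam) (\<tau>(i := x)))
                     (cond n \<nu> (insert i Lam) (\<tau>(i := y))) j | x y. x \<in> S \<and> y \<in> S})"

definition infl_mat :: "nat \<Rightarrow> ((nat \<Rightarrow> bool) \<Rightarrow> real) \<Rightarrow> nat set \<Rightarrow> (nat \<Rightarrow> bool) \<Rightarrow> complex mat" where
  "infl_mat n \<nu> Lam \<tau> = mat n n (\<lambda>(i, j). complex_of_real (infl n \<nu> Lam \<tau> i j))"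

definition spec_indep :: "nat \<Rightarrow> real \<Rightarrow> ((nat \<Rightarrow> bool) \<Rightarrow> real) \<Rightarrow> bool" where
  "spec_indep n \<eta> \<nu> \<longleftrightarrow>
     (\<forall>Lam \<tau>. Lam \<subseteq> {..<n} \<and> 0 < pinprob n \<nu> Lam \<tau> \<longrightarrow>
        spectral_radius (infl_mat n \<nu> Lam \<tau>) \<le> \<eta>)"

definition complete_spec_indep :: "nat \<Rightarrow> real \<Rightarrow> real \<Rightarrow> ((nat \<Rightarrow> bool) \<Rightarrow> real) \<Rightarrow> bool" where
  "complete_spec_indep n \<eta> \<epsilon> \<mu> \<longleftrightarrow>
     (\<forall>lam. (\<forall>i<n. 0 < lam i \<and> lam i \<le> 1 + \<epsilon>) \<longrightarrow> spec_indep n \<eta> (tilt n lam \<mu>))"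

definition Ffun :: "nat \<Rightarrow> ((nat \<Rightarrow> bool) \<Rightarrow> real) \<Rightarrow> real \<Rightarrow> (nat \<Rightarrow> real) \<Rightarrow> real" where
  "Ffun n \<mu> \<alpha> z = gpoly n \<mu> (\<lambda>i. z i powr \<alpha>) powr (1 / \<alpha>) /
      (\<Prod>i<n. marg n \<mu> i True * z i + marg n \<mu> i False)"

end

theory Submission
  imports Defs "HOL-Analysis.Convex"
begin

text \<open>Put s_i = mu_i(+1) x_i + mu_i(-1) and interpolate linearly between 1 and the normalised
  point: y_i^+(t) = 1 + t (x_i / s_i - 1), y_i^-(t) = 1 + t (1 / s_i - 1) for t in [0, 1], and
  P(t) = E_mu [prod_i y_i(t)^alpha], where y_i means y_i^+ or y_i^- according to the spin sigma_i.
  Then P(0) = 1, P'(0) = 0 because each y_i(t) has mean 1 under mu_i, and P(1) = F_{mu,alpha}(x)^alpha.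
  The second derivative of log P is an expectation under the tilt of mu by the external field
  lambda_i(t) = (y_i^+(t) / y_i^-(t))^alpha, which lies in (0, 1 + epsilon]; writing u_i for the
  logarithmic derivative of y_i, the inequality (log P)'' \<le> 0 becomes
  alpha Var(sum_i u_i) \<le> sum_i E[u_i^2]. Spectral independence of the tilt at the empty pinning gives
  Var(sum_i u_i) \<le> eta sum_i Var(u_i): the covariance matrix of the spins, normalised by their
  variances, is reversible and dominated entrywise by the influence matrix, so a power-method
  argument bounds its Rayleigh quotients by the spectral radius. Hence log P is concave with a
  critical point at 0, and P(1) \<le> P(0) = 1.\<close>

section \<open>Powers of real matrices\<close>

abbreviation complex_mat_of :: "nat \<Rightarrow> (nat \<Rightarrow> nat \<Rightarrow> real) \<Rightarrow> complex mat" where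
  "complex_mat_of n B \<equiv> mat n n (\<lambda>(i, j). complex_of_real (B i j))"

fun matpow :: "nat \<Rightarrow> (nat \<Rightarrow> nat \<Rightarrow> real) \<Rightarrow> nat \<Rightarrow> nat \<Rightarrow> nat \<Rightarrow> real" where
  "matpow n B 0 i j = of_bool (i = j)"
| "matpow n B (Suc k) i j = (\<Sum>l<n. matpow n B k i l * B l j)"

lemma index_complex_mat_of_pow:
  assumes "i < n" "j < n"
  shows "(complex_mat_of n B ^\<^sub>m k) $$ (i, j) = complex_of_real (matpow n B k i j)"
  using assms
proof (induction k arbitrary: j)
  case (Suc k)
  have "(complex_mat_of n B ^\<^sub>m Suc k) $$ (i, j)
      = (\<Sum>l<n. (complex_mat_of n B ^\<^sub>m k) $$ (i, l) * complex_of_real (B l j))"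
    using Suc.prems by (simp add: scalar_prod_def atLeast0LessThan)
  also have "\<dots> = complex_of_real (matpow n B (Suc k) i j)"
    using Suc by simp
  finally show ?case .
qed simp

lemma matpow_divide: "matpow n (\<lambda>i j. B i j / c) k i j = matpow n B k i j / c ^ k"
  by (induction k arbitrary: j) (simp_all add: sum_divide_distrib mult.commute)

lemma matpow_nonneg:
  assumes "\<And>i j. i < n \<Longrightarrow> j < n \<Longrightarrow> 0 \<le> B i j" and "j < n"
  shows "0 \<le> matpow n B k i j"
  using assms(2) by (induction k arbitrary: j) (auto intro!: sum_nonneg mult_nonneg_nonneg assms(1))

lemma spectral_radius_complex_mat_of_divide:
  assumes "0 < n" "0 < c"
  shows "spectral_radius (complex_mat_of n (\<lambda>i j. B i j / c)) \<le> spectral_radius (complex_mat_of n B) / c"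
proof -
  let ?A = "complex_mat_of n B" and ?A' = "complex_mat_of n (\<lambda>i j. B i j / c)"
  obtain ev where ev: "ev \<in> spectrum ?A'" and r: "spectral_radius ?A' = norm ev"
    using spectral_radius_mem_max(1)[of ?A' n] assms(1) by auto
  then obtain v where "eigenvector ?A' v ev"
    unfolding spectrum_def eigenvalue_def by auto
  hence v: "v \<in> carrier_vec n" "v \<noteq> 0\<^sub>v n" and eq: "?A' *\<^sub>v v = ev \<cdot>\<^sub>v v"
    unfolding eigenvector_def by auto
  have "?A *\<^sub>v v = (complex_of_real c * ev) \<cdot>\<^sub>v v"
  proof (rule eq_vecI)
    fix i assume "i < dim_vec ((complex_of_real c * ev) \<cdot>\<^sub>v v)"
    hence i: "i < n" using v by auto
    have "(?A *\<^sub>v v) $ i = complex_of_real c * ((?A' *\<^sub>v v) $ i)"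
      using i v assms(2) by (simp add: scalar_prod_def sum_distrib_left algebra_simps)
    also have "\<dots> = ((complex_of_real c * ev) \<cdot>\<^sub>v v) $ i"
      using eq i v by simp
    finally show "(?A *\<^sub>v v) $ i = ((complex_of_real c * ev) \<cdot>\<^sub>v v) $ i" .
  qed (use v in auto)
  hence "complex_of_real c * ev \<in> spectrum ?A"
    using v unfolding spectrum_def eigenvalue_def eigenvector_def by auto
  hence "norm (complex_of_real c * ev) \<le> spectral_radius ?A"
    using spectral_radius_mem_max(2)[of ?A n] assms(1) by auto
  hence "c * norm ev \<le> spectral_radius ?A"
    using assms(2) by (simp add: norm_mult)
  thus ?thesis using r assms(2) by (simp add: field_simps)
qed

lemma matpow_bound_spectral_radius:
  assumes "spectral_radius (complex_mat_of n B) \<le> \<eta>" "0 < \<eta>"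
  obtains c1 c2 where
    "\<And>k i j. i < n \<Longrightarrow> j < n \<Longrightarrow> \<bar>matpow n B k i j\<bar> \<le> \<eta> ^ k * (c1 + c2 * real k ^ (n - 1))"
proof (cases "n = 0")
  case False
  let ?A = "complex_mat_of n (\<lambda>i j. B i j / \<eta>)"
  have "spectral_radius ?A \<le> spectral_radius (complex_mat_of n B) / \<eta>"
    using spectral_radius_complex_mat_of_divide[of n \<eta> B] False assms(2) by simp
  also have "\<dots> \<le> 1"
    using assms by simp
  finally have "spectral_radius ?A \<le> 1" .
  then obtain c1 c2 where bound: "\<And>k. norm_bound (?A ^\<^sub>m k) (c1 + c2 * real k ^ (n - 1))"
    using spectral_radius_jnf_norm_bound_le_1_upper_triangular[of ?A n] by auto
  show ?thesis
  proof (rule that)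
    fix k i j assume ij: "i < n" "j < n"
    have "norm ((?A ^\<^sub>m k) $$ (i, j)) \<le> c1 + c2 * real k ^ (n - 1)"
      using bound[of k] ij unfolding norm_bound_def by auto
    hence "norm (complex_of_real (matpow n B k i j / \<eta> ^ k)) \<le> c1 + c2 * real k ^ (n - 1)"
      using index_complex_mat_of_pow[OF ij, of "\<lambda>i j. B i j / \<eta>" k]
      by (simp add: matpow_divide del: of_real_divide of_real_power)
    hence "\<bar>matpow n B k i j / \<eta> ^ k\<bar> \<le> c1 + c2 * real k ^ (n - 1)"
      by (simp only: norm_of_real)
    thus "\<bar>matpow n B k i j\<bar> \<le> \<eta> ^ k * (c1 + c2 * real k ^ (n - 1))"
      using assms(2) by (simp add: abs_divide field_simps)
  qed
qed auto

section \<open>Rayleigh quotients of reversible matrices\<close>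

lemma power_div_power_tendsto_zero:
  fixes q :: real
  assumes "1 < q"
  shows "(\<lambda>N. real N ^ e / q ^ N) \<longlonglongrightarrow> 0"
proof -
  have lq: "0 < ln q" using assms by simp
  have "filterlim (\<lambda>N. real N * ln q) at_top sequentially"
    by (rule filterlim_at_top_mult_tendsto_pos[OF tendsto_const lq filterlim_real_sequentially])
  hence "(\<lambda>N. (real N * ln q) ^ e / exp (real N * ln q) / ln q ^ e) \<longlonglongrightarrow> 0 / ln q ^ e"
    by (intro tendsto_divide filterlim_compose[OF tendsto_power_div_exp_0]) (use lq in auto)
  moreover have "(real N * ln q) ^ e / exp (real N * ln q) / ln q ^ e = real N ^ e / q ^ N" for N
    using lq assms by (simp add: power_mult_distrib exp_of_nat_mult)
  ultimately show ?thesis by simp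
qed

lemma exists_pow2_poly_less_power:
  fixes q c :: real
  assumes "1 < q" "0 < c"
  obtains k where "c1 + c2 * real (2 ^ k) ^ e < c * q ^ 2 ^ k"
proof -
  have "(\<lambda>N. c1 * (real N ^ 0 / q ^ N) + c2 * (real N ^ e / q ^ N)) \<longlonglongrightarrow> c1 * 0 + c2 * 0"
    by (intro tendsto_intros power_div_power_tendsto_zero assms(1))
  hence "eventually (\<lambda>N. c1 * (real N ^ 0 / q ^ N) + c2 * (real N ^ e / q ^ N) < c) sequentially"
    using assms(2) by (intro order_tendstoD) auto
  hence "eventually (\<lambda>k. c1 * (real (2 ^ k) ^ 0 / q ^ 2 ^ k) + c2 * (real (2 ^ k) ^ e / q ^ 2 ^ k) < c) sequentially"
    by (rule eventually_compose_filterlim) (simp add: filterlim_subseq strict_mono_def)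
  then obtain k where "(c1 + c2 * real (2 ^ k) ^ e) / q ^ 2 ^ k < c"
    by (auto simp: eventually_sequentially add_divide_distrib)
  thus ?thesis
    using that assms(1) by (simp add: divide_less_eq)
qed

lemma doubling_sequence_rate_le:
  fixes a :: "nat \<Rightarrow> real"
  assumes nonneg: "0 \<le> a 0"
    and doubling: "\<And>m. a m ^ 2 \<le> a 0 * a (2 * m)"
    and growth: "\<And>k. a k \<le> \<eta> ^ k * (c1 + c2 * real k ^ e)"
    and "0 < \<eta>"
  shows "a 1 \<le> \<eta> * a 0"
proof (rule ccontr)
  assume "\<not> ?thesis"
  hence gt: "\<eta> * a 0 < a 1" by simp
  have pos: "0 < a 0"
  proof (rule ccontr)
    assume "\<not> 0 < a 0"
    hence "a 0 = 0" using nonneg by simp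
    hence "0 < a 1 ^ 2" using gt by simp
    thus False using doubling[of 1] \<open>a 0 = 0\<close> by simp
  qed
  define r where "r = a 1 / a 0"
  have r: "\<eta> < r" using gt pos unfolding r_def by (simp add: field_simps)
  have lower: "a 0 * r ^ (2 ^ k) \<le> a (2 ^ k)" for k
  proof (induction k)
    case (Suc k)
    have "(a 0 * r ^ (2 ^ k)) ^ 2 \<le> a (2 ^ k) ^ 2"
      using Suc pos r \<open>0 < \<eta>\<close> by (intro power_mono) auto
    also have "\<dots> \<le> a 0 * a (2 ^ Suc k)" using doubling[of "2 ^ k"] by simp
    finally have "a 0 * (a 0 * r ^ (2 ^ Suc k)) \<le> a 0 * a (2 ^ Suc k)"
      by (simp add: power2_eq_square power_mult_distrib power_add mult_2 ac_simps)
    thus ?case using pos by simp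
  qed (use pos in \<open>simp add: r_def\<close>)
  have "1 < r / \<eta>" using r \<open>0 < \<eta>\<close> by simp
  then obtain k where k: "c1 + c2 * real (2 ^ k) ^ e < a 0 * (r / \<eta>) ^ 2 ^ k"
    using exists_pow2_poly_less_power pos by blast
  have "a 0 * r ^ (2 ^ k) \<le> \<eta> ^ (2 ^ k) * (c1 + c2 * real (2 ^ k) ^ e)"
    using lower[of k] growth[of "2 ^ k"] by simp
  hence "a 0 * (r / \<eta>) ^ (2 ^ k) \<le> c1 + c2 * real (2 ^ k) ^ e"
    using \<open>0 < \<eta>\<close> by (simp add: power_divide field_simps)
  thus False using k by simp
qed

definition matvec :: "nat \<Rightarrow> (nat \<Rightarrow> nat \<Rightarrow> real) \<Rightarrow> (nat \<Rightarrow> real) \<Rightarrow> nat \<Rightarrow> real" where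
  "matvec n M v i = (\<Sum>j<n. M i j * v j)"

definition weighted_dot :: "nat \<Rightarrow> (nat \<Rightarrow> real) \<Rightarrow> (nat \<Rightarrow> real) \<Rightarrow> (nat \<Rightarrow> real) \<Rightarrow> real" where
  "weighted_dot n V u v = (\<Sum>i<n. V i * u i * v i)"

lemma weighted_dot_self_nonneg:
  assumes "\<And>i. i < n \<Longrightarrow> 0 \<le> V i"
  shows "0 \<le> weighted_dot n V u u"
  unfolding weighted_dot_def using assms by (auto intro!: sum_nonneg simp: mult.assoc)

lemma weighted_dot_Cauchy_Schwarz:
  assumes "\<And>i. i < n \<Longrightarrow> 0 \<le> V i"
  shows "(weighted_dot n V u v) ^ 2 \<le> weighted_dot n V u u * weighted_dot n V v v"
proof -
  have "weighted_dot n V u v = (\<Sum>i<n. (sqrt (V i) * u i) * (sqrt (V i) * v i))"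
    and "weighted_dot n V u u = (\<Sum>i<n. (sqrt (V i) * u i) ^ 2)"
    and "weighted_dot n V v v = (\<Sum>i<n. (sqrt (V i) * v i) ^ 2)"
    using assms unfolding weighted_dot_def
    by (auto intro!: sum.cong simp: power2_eq_square algebra_simps real_sqrt_mult[symmetric])
  thus ?thesis by (simp only: Cauchy_Schwarz_ineq_sum)
qed

lemma weighted_dot_matvec_funpow:
  assumes reversible: "\<And>i j. i < n \<Longrightarrow> j < n \<Longrightarrow> V i * M i j = V j * M j i"
  shows "weighted_dot n V u ((matvec n M ^^ k) v) = weighted_dot n V ((matvec n M ^^ k) u) v"
proof -
  have adjoint: "weighted_dot n V u (matvec n M v) = weighted_dot n V (matvec n M u) v" for u v
  proof -
    have "weighted_dot n V u (matvec n M v) = (\<Sum>i<n. \<Sum>j<n. V i * M i j * u i * v j)"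
      unfolding weighted_dot_def matvec_def by (simp add: sum_distrib_left ac_simps)
    also have "\<dots> = (\<Sum>i<n. \<Sum>j<n. V j * M j i * u i * v j)"
      by (intro sum.cong refl) (simp add: reversible)
    also have "\<dots> = weighted_dot n V (matvec n M u) v"
      unfolding weighted_dot_def matvec_def
      by (subst sum.swap) (simp add: sum_distrib_left sum_distrib_right ac_simps)
    finally show ?thesis .
  qed
  show ?thesis
  proof (induction k arbitrary: v)
    case (Suc k)
    have "weighted_dot n V u ((matvec n M ^^ Suc k) v) = weighted_dot n V u ((matvec n M ^^ k) (matvec n M v))"
      by (simp add: funpow_Suc_right del: funpow.simps)
    also have "\<dots> = weighted_dot n V (matvec n M ((matvec n M ^^ k) u)) v"
      by (simp add: Suc adjoint)
    finally show ?case by simp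
  qed simp
qed

lemma matvec_funpow_abs_le:
  assumes dominated: "\<And>i j. i < n \<Longrightarrow> j < n \<Longrightarrow> \<bar>M i j\<bar> \<le> B i j" and "i < n"
  shows "\<bar>(matvec n M ^^ k) v i\<bar> \<le> (\<Sum>j<n. matpow n B k i j * \<bar>v j\<bar>)"
  using assms(2)
proof (induction k arbitrary: v i)
  case 0
  then show ?case by simp
next
  case (Suc k)
  have B_nonneg: "0 \<le> B i j" if "i < n" "j < n" for i j
    using dominated[OF that] by linarith
  have "\<bar>(matvec n M ^^ Suc k) v i\<bar> = \<bar>(matvec n M ^^ k) (matvec n M v) i\<bar>"
    by (simp add: funpow_Suc_right del: funpow.simps)
  also have "\<dots> \<le> (\<Sum>l<n. matpow n B k i l * \<bar>matvec n M v l\<bar>)"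
    using Suc by blast
  also have "\<dots> \<le> (\<Sum>l<n. matpow n B k i l * (\<Sum>j<n. B l j * \<bar>v j\<bar>))"
  proof (intro sum_mono mult_left_mono)
    fix l assume l: "l \<in> {..<n}"
    have "\<bar>matvec n M v l\<bar> \<le> (\<Sum>j<n. \<bar>M l j\<bar> * \<bar>v j\<bar>)"
      unfolding matvec_def by (rule order_trans[OF sum_abs]) (simp add: abs_mult)
    also have "\<dots> \<le> (\<Sum>j<n. B l j * \<bar>v j\<bar>)"
      using l by (intro sum_mono mult_right_mono dominated) auto
    finally show "\<bar>matvec n M v l\<bar> \<le> (\<Sum>j<n. B l j * \<bar>v j\<bar>)" .
    show "0 \<le> matpow n B k i l"
      using l B_nonneg by (intro matpow_nonneg) auto
  qed
  also have "\<dots> = (\<Sum>l<n. \<Sum>j<n. matpow n B k i l * B l j * \<bar>v j\<bar>)"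
    by (simp add: sum_distrib_left ac_simps)
  also have "\<dots> = (\<Sum>j<n. matpow n B (Suc k) i j * \<bar>v j\<bar>)"
    by (subst sum.swap) (simp add: sum_distrib_right)
  finally show ?case .
qed

lemma weighted_dot_matvec_funpow_le:
  assumes V: "\<And>i. i < n \<Longrightarrow> 0 \<le> V i"
    and dominated: "\<And>i j. i < n \<Longrightarrow> j < n \<Longrightarrow> \<bar>M i j\<bar> \<le> B i j"
    and bound: "\<And>i j. i < n \<Longrightarrow> j < n \<Longrightarrow> matpow n B k i j \<le> b"
  shows "weighted_dot n V d ((matvec n M ^^ k) d) \<le> b * ((\<Sum>i<n. V i * \<bar>d i\<bar>) * (\<Sum>j<n. \<bar>d j\<bar>))"
proof -
  have "weighted_dot n V d ((matvec n M ^^ k) d) \<le> (\<Sum>i<n. V i * \<bar>d i\<bar> * \<bar>(matvec n M ^^ k) d i\<bar>)"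
    unfolding weighted_dot_def
    using V by (intro sum_mono) (simp add: mult.assoc mult_left_mono flip: abs_mult)
  also have "\<dots> \<le> (\<Sum>i<n. V i * \<bar>d i\<bar> * (\<Sum>j<n. b * \<bar>d j\<bar>))"
  proof (intro sum_mono mult_left_mono)
    fix i assume i: "i \<in> {..<n}"
    have "\<bar>(matvec n M ^^ k) d i\<bar> \<le> (\<Sum>j<n. matpow n B k i j * \<bar>d j\<bar>)"
      using i by (intro matvec_funpow_abs_le[OF dominated]) auto
    also have "\<dots> \<le> (\<Sum>j<n. b * \<bar>d j\<bar>)"
      using i bound by (intro sum_mono mult_right_mono) auto
    finally show "\<bar>(matvec n M ^^ k) d i\<bar> \<le> (\<Sum>j<n. b * \<bar>d j\<bar>)" .
  qed (use V in auto)
  also have "\<dots> = b * ((\<Sum>i<n. V i * \<bar>d i\<bar>) * (\<Sum>j<n. \<bar>d j\<bar>))"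
    by (simp add: sum_distrib_left sum_distrib_right ac_simps)
  finally show ?thesis .
qed

text \<open>A power-method argument: no eigenvector is needed, because the quadratic forms
  a k = <d, M^k d> are log-convex along powers of two and grow no faster than the powers of B.\<close>
lemma reversible_Rayleigh_le_spectral_radius:
  assumes V: "\<And>i. i < n \<Longrightarrow> 0 \<le> V i"
    and reversible: "\<And>i j. i < n \<Longrightarrow> j < n \<Longrightarrow> V i * M i j = V j * M j i"
    and dominated: "\<And>i j. i < n \<Longrightarrow> j < n \<Longrightarrow> \<bar>M i j\<bar> \<le> B i j"
    and radius: "spectral_radius (complex_mat_of n B) \<le> \<eta>" and "0 < \<eta>"
  shows "weighted_dot n V d (matvec n M d) \<le> \<eta> * weighted_dot n V d d"
proof -
  obtain c1 c2 where bound: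
    "\<And>k i j. i < n \<Longrightarrow> j < n \<Longrightarrow> \<bar>matpow n B k i j\<bar> \<le> \<eta> ^ k * (c1 + c2 * real k ^ (n - 1))"
    using matpow_bound_spectral_radius[OF radius \<open>0 < \<eta>\<close>] by blast
  define a where "a k = weighted_dot n V d ((matvec n M ^^ k) d)" for k
  define D where "D = (\<Sum>i<n. V i * \<bar>d i\<bar>) * (\<Sum>j<n. \<bar>d j\<bar>)"
  have "a 1 \<le> \<eta> * a 0"
  proof (rule doubling_sequence_rate_le)
    show "0 \<le> a 0"
      unfolding a_def using V by (simp add: weighted_dot_self_nonneg)
    show "a m ^ 2 \<le> a 0 * a (2 * m)" for m
    proof -
      have "a (2 * m) = weighted_dot n V ((matvec n M ^^ m) d) ((matvec n M ^^ m) d)"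
        unfolding a_def mult_2 funpow_add o_def by (rule weighted_dot_matvec_funpow[OF reversible])
      thus ?thesis
        unfolding a_def using weighted_dot_Cauchy_Schwarz[OF V] by simp
    qed
    show "a k \<le> \<eta> ^ k * (c1 * D + c2 * D * real k ^ (n - 1))" for k
    proof -
      have "a k \<le> \<eta> ^ k * (c1 + c2 * real k ^ (n - 1)) * D"
        unfolding a_def D_def
        by (rule weighted_dot_matvec_funpow_le[OF V dominated]) (use bound in \<open>auto simp: abs_le_iff\<close>)
      thus ?thesis by (simp add: algebra_simps)
    qed
  qed fact
  thus ?thesis
    unfolding a_def by simp
qed

section \<open>Expectation and covariance on the hypercube\<close>

lemma finite_cube: "finite (cube n)"
proof (rule finite_subset)
  show "cube n \<subseteq> (\<lambda>S i. i \<in> S) ` Pow {..<n}"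
  proof
    fix \<sigma> assume "\<sigma> \<in> cube n"
    hence "\<sigma> = (\<lambda>i. i \<in> {i. i < n \<and> \<sigma> i})"
      unfolding cube_def by (auto simp: not_le[symmetric])
    thus "\<sigma> \<in> (\<lambda>S i. i \<in> S) ` Pow {..<n}" by blast
  qed
qed simp

definition cube_expect :: "nat \<Rightarrow> ((nat \<Rightarrow> bool) \<Rightarrow> real) \<Rightarrow> ((nat \<Rightarrow> bool) \<Rightarrow> real) \<Rightarrow> real" where
  "cube_expect n \<nu> f = (\<Sum>\<sigma>\<in>cube n. \<nu> \<sigma> * f \<sigma>)"

definition cube_cov ::
  "nat \<Rightarrow> ((nat \<Rightarrow> bool) \<Rightarrow> real) \<Rightarrow> ((nat \<Rightarrow> bool) \<Rightarrow> real) \<Rightarrow> ((nat \<Rightarrow> bool) \<Rightarrow> real) \<Rightarrow> real" where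
  "cube_cov n \<nu> f g = cube_expect n \<nu> (\<lambda>\<sigma>. f \<sigma> * g \<sigma>) - cube_expect n \<nu> f * cube_expect n \<nu> g"

abbreviation cube_var :: "nat \<Rightarrow> ((nat \<Rightarrow> bool) \<Rightarrow> real) \<Rightarrow> ((nat \<Rightarrow> bool) \<Rightarrow> real) \<Rightarrow> real" where
  "cube_var n \<nu> f \<equiv> cube_cov n \<nu> f f"

lemma cube_expect_const: "is_distr n \<nu> \<Longrightarrow> cube_expect n \<nu> (\<lambda>_. c) = c"
  unfolding cube_expect_def is_distr_def by (simp flip: sum_distrib_right)

lemma cube_expect_add: "cube_expect n \<nu> (\<lambda>\<sigma>. f \<sigma> + g \<sigma>) = cube_expect n \<nu> f + cube_expect n \<nu> g"
  unfolding cube_expect_def by (simp add: distrib_left sum.distrib)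

lemma cube_expect_diff: "cube_expect n \<nu> (\<lambda>\<sigma>. f \<sigma> - g \<sigma>) = cube_expect n \<nu> f - cube_expect n \<nu> g"
  unfolding cube_expect_def by (simp add: right_diff_distrib sum_subtractf)

lemma cube_expect_cmult: "cube_expect n \<nu> (\<lambda>\<sigma>. c * f \<sigma>) = c * cube_expect n \<nu> f"
  unfolding cube_expect_def by (simp add: sum_distrib_left ac_simps)

lemma cube_expect_sum: "cube_expect n \<nu> (\<lambda>\<sigma>. \<Sum>i\<in>I. f i \<sigma>) = (\<Sum>i\<in>I. cube_expect n \<nu> (f i))"
  unfolding cube_expect_def by (simp add: sum_distrib_left sum.swap[of _ I])

lemma cube_expect_spin:
  "cube_expect n \<nu> (\<lambda>\<sigma>. if \<sigma> i then a else b) = marg n \<nu> i True * a + marg n \<nu> i False * b"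
proof -
  have "cube_expect n \<nu> (\<lambda>\<sigma>. if \<sigma> i then a else b)
      = (\<Sum>\<sigma>\<in>cube n. (if \<sigma> i = True then \<nu> \<sigma> else 0) * a + (if \<sigma> i = False then \<nu> \<sigma> else 0) * b)"
    unfolding cube_expect_def by (intro sum.cong) auto
  also have "\<dots> = marg n \<nu> i True * a + marg n \<nu> i False * b"
    unfolding marg_def by (simp add: sum.distrib sum.inter_filter finite_cube flip: sum_distrib_right)
  finally show ?thesis .
qed

lemma marg_True_add_False: "marg n \<nu> i True + marg n \<nu> i False = (\<Sum>\<sigma>\<in>cube n. \<nu> \<sigma>)"
  using cube_expect_spin[of n \<nu> i 1 1] by (simp add: cube_expect_def)

lemma marg_nonneg: "is_distr n \<nu> \<Longrightarrow> 0 \<le> marg n \<nu> i b"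
  unfolding is_distr_def marg_def by (auto intro!: sum_nonneg)

lemma cube_cov_commute: "cube_cov n \<nu> f g = cube_cov n \<nu> g f"
  unfolding cube_cov_def by (simp add: ac_simps)

lemma cube_cov_centered:
  assumes "is_distr n \<nu>"
  shows "cube_cov n \<nu> f g
      = cube_expect n \<nu> (\<lambda>\<sigma>. (f \<sigma> - cube_expect n \<nu> f) * (g \<sigma> - cube_expect n \<nu> g))"
proof -
  let ?F = "cube_expect n \<nu> f" and ?G = "cube_expect n \<nu> g"
  have "cube_expect n \<nu> (\<lambda>\<sigma>. (f \<sigma> - ?F) * (g \<sigma> - ?G))
      = cube_expect n \<nu> (\<lambda>\<sigma>. (f \<sigma> * g \<sigma> - ?F * g \<sigma>) - (?G * f \<sigma> - ?F * ?G))"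
    by (simp add: algebra_simps)
  also have "\<dots> = cube_cov n \<nu> f g"
    using assms by (simp add: cube_cov_def cube_expect_diff cube_expect_cmult cube_expect_const)
  finally show ?thesis ..
qed

lemma cube_cov_eq_sum_sqrt_weights:
  assumes "is_distr n \<nu>"
  shows "cube_cov n \<nu> f g = (\<Sum>\<sigma>\<in>cube n.
    (sqrt (\<nu> \<sigma>) * (f \<sigma> - cube_expect n \<nu> f)) * (sqrt (\<nu> \<sigma>) * (g \<sigma> - cube_expect n \<nu> g)))"
proof -
  have weighted: "\<nu> \<sigma> * (a * b) = sqrt (\<nu> \<sigma>) * a * (sqrt (\<nu> \<sigma>) * b)" if "\<sigma> \<in> cube n" for \<sigma> a b
  proof -
    have "sqrt (\<nu> \<sigma>) * a * (sqrt (\<nu> \<sigma>) * b) = (sqrt (\<nu> \<sigma>) * sqrt (\<nu> \<sigma>)) * (a * b)"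
      by (simp only: mult_ac)
    thus ?thesis using assms that unfolding is_distr_def by simp
  qed
  show ?thesis
    unfolding cube_cov_centered[OF assms] cube_expect_def
    by (rule sum.cong[OF refl]) (rule weighted)
qed

lemma cube_var_nonneg: "is_distr n \<nu> \<Longrightarrow> 0 \<le> cube_var n \<nu> f"
  by (simp add: cube_cov_eq_sum_sqrt_weights sum_nonneg)

lemma cube_cov_Cauchy_Schwarz:
  assumes "is_distr n \<nu>"
  shows "(cube_cov n \<nu> f g) ^ 2 \<le> cube_var n \<nu> f * cube_var n \<nu> g"
proof -
  let ?a = "\<lambda>\<sigma>. sqrt (\<nu> \<sigma>) * (f \<sigma> - cube_expect n \<nu> f)"
  let ?b = "\<lambda>\<sigma>. sqrt (\<nu> \<sigma>) * (g \<sigma> - cube_expect n \<nu> g)"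
  have "cube_cov n \<nu> f g = (\<Sum>\<sigma>\<in>cube n. ?a \<sigma> * ?b \<sigma>)"
    and "cube_var n \<nu> f = (\<Sum>\<sigma>\<in>cube n. (?a \<sigma>) ^ 2)"
    and "cube_var n \<nu> g = (\<Sum>\<sigma>\<in>cube n. (?b \<sigma>) ^ 2)"
    unfolding cube_cov_eq_sum_sqrt_weights[OF assms] power2_eq_square by (rule refl)+
  thus ?thesis by (simp only: Cauchy_Schwarz_ineq_sum)
qed

lemma cube_var_sum:
  "cube_var n \<nu> (\<lambda>\<sigma>. \<Sum>i\<in>I. f i \<sigma>) = (\<Sum>i\<in>I. \<Sum>j\<in>I. cube_cov n \<nu> (f i) (f j))"
  unfolding cube_cov_def
  by (simp add: sum_product cube_expect_sum sum_subtractf)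

lemma cube_cov_affine:
  assumes "is_distr n \<nu>"
  shows "cube_cov n \<nu> (\<lambda>\<sigma>. a + b * f \<sigma>) (\<lambda>\<sigma>. c + d * g \<sigma>) = b * d * cube_cov n \<nu> f g"
  using assms
  by (simp add: cube_cov_def algebra_simps cube_expect_add cube_expect_cmult cube_expect_const)

section \<open>Influences and spin covariances\<close>

lemma cond_empty: "is_distr n \<nu> \<Longrightarrow> cond n \<nu> {} \<tau> = \<nu>"
  by (simp add: is_distr_def cond_def agrees_def pinprob_def fun_eq_iff)

lemma cond_single:
  "cond n \<nu> {i} (\<tau>(i := c)) = (\<lambda>\<sigma>. if \<sigma> i = c then \<nu> \<sigma> / marg n \<nu> i c else 0)"
  by (simp add: cond_def agrees_def pinprob_def marg_def fun_eq_iff)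

lemma marg_eq_sum_if: "marg n \<nu> i c = (\<Sum>\<sigma>\<in>cube n. if \<sigma> i = c then \<nu> \<sigma> else 0)"
  by (simp add: marg_def sum.inter_filter finite_cube)

lemma sum_cond_single:
  assumes "0 < marg n \<nu> i c"
  shows "(\<Sum>\<sigma>\<in>cube n. cond n \<nu> {i} (\<tau>(i := c)) \<sigma>) = 1"
proof -
  have "(\<Sum>\<sigma>\<in>cube n. cond n \<nu> {i} (\<tau>(i := c)) \<sigma>)
      = (\<Sum>\<sigma>\<in>cube n. (if \<sigma> i = c then \<nu> \<sigma> else 0) / marg n \<nu> i c)"
    unfolding cond_single by (intro sum.cong) auto
  also have "\<dots> = 1"
    using assms by (simp flip: sum_divide_distrib marg_eq_sum_if)
  finally show ?thesis .
qed

lemma marg_cond_single: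
  "marg n (cond n \<nu> {i} (\<tau>(i := c))) j b
     = cube_expect n \<nu> (\<lambda>\<sigma>. of_bool (\<sigma> i = c \<and> \<sigma> j = b)) / marg n \<nu> i c"
proof -
  have "marg n (cond n \<nu> {i} (\<tau>(i := c))) j b
      = (\<Sum>\<sigma>\<in>cube n. \<nu> \<sigma> * of_bool (\<sigma> i = c \<and> \<sigma> j = b) / marg n \<nu> i c)"
    unfolding cond_single marg_eq_sum_if[of n "\<lambda>\<sigma>. if \<sigma> i = c then \<nu> \<sigma> / marg n \<nu> i c else 0"]
    by (intro sum.cong) auto
  thus ?thesis by (simp add: cube_expect_def sum_divide_distrib)
qed

lemma tv_marg_distr:
  assumes "(\<Sum>\<sigma>\<in>cube n. \<nu>1 \<sigma>) = 1" "(\<Sum>\<sigma>\<in>cube n. \<nu>2 \<sigma>) = 1"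
  shows "tv_marg n \<nu>1 \<nu>2 j = \<bar>marg n \<nu>1 j True - marg n \<nu>2 j True\<bar>"
  using marg_True_add_False[of n \<nu>1 j] marg_True_add_False[of n \<nu>2 j] assms
  by (simp add: tv_marg_def abs_minus_commute)

lemma tv_marg_cond_le_infl:
  assumes "0 < marg n (cond n \<nu> Lam \<tau>) i x" "0 < marg n (cond n \<nu> Lam \<tau>) i y"
  shows "tv_marg n (cond n \<nu> (insert i Lam) (\<tau>(i := x))) (cond n \<nu> (insert i Lam) (\<tau>(i := y))) j
    \<le> infl n \<nu> Lam \<tau> i j"
  unfolding infl_def Let_def
proof (rule Max_ge)
  show "finite {tv_marg n (cond n \<nu> (insert i Lam) (\<tau>(i := x))) (cond n \<nu> (insert i Lam) (\<tau>(i := y))) j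
      | x y. x \<in> {b. 0 < marg n (cond n \<nu> Lam \<tau>) i b} \<and> y \<in> {b. 0 < marg n (cond n \<nu> Lam \<tau>) i b}}"
    by (rule finite_subset[of _ "(\<lambda>(x, y). tv_marg n (cond n \<nu> (insert i Lam) (\<tau>(i := x)))
        (cond n \<nu> (insert i Lam) (\<tau>(i := y))) j) ` UNIV"]) auto
qed (use assms in blast)

lemma cube_expect_spin_indicator: "cube_expect n \<nu> (\<lambda>\<sigma>. of_bool (\<sigma> i)) = marg n \<nu> i True"
  using cube_expect_spin[of n \<nu> i 1 0] by (simp add: of_bool_def)

lemma cube_var_spin_indicator:
  assumes "is_distr n \<nu>"
  shows "cube_var n \<nu> (\<lambda>\<sigma>. of_bool (\<sigma> i)) = marg n \<nu> i True * marg n \<nu> i False"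
proof -
  have mF: "marg n \<nu> i False = 1 - marg n \<nu> i True"
    using marg_True_add_False[of n \<nu> i] assms unfolding is_distr_def by simp
  show ?thesis
    unfolding mF by (simp add: cube_cov_def algebra_simps cube_expect_spin_indicator flip: of_bool_conj)
qed

lemma tv_marg_cond_spin:
  assumes distr: "is_distr n \<nu>" and pos: "0 < marg n \<nu> i True" "0 < marg n \<nu> i False"
  shows "tv_marg n (cond n \<nu> {i} (\<tau>(i := True))) (cond n \<nu> {i} (\<tau>(i := False))) j
    = \<bar>cube_cov n \<nu> (\<lambda>\<sigma>. of_bool (\<sigma> i)) (\<lambda>\<sigma>. of_bool (\<sigma> j)) / cube_var n \<nu> (\<lambda>\<sigma>. of_bool (\<sigma> i))\<bar>"
proof -
  define m where "m = marg n \<nu> i True"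
  define P where "P = cube_expect n \<nu> (\<lambda>\<sigma>. of_bool (\<sigma> i \<and> \<sigma> j))"
  have mF: "marg n \<nu> i False = 1 - m"
    using marg_True_add_False[of n \<nu> i] distr unfolding m_def is_distr_def by simp
  have "(\<lambda>\<sigma>. of_bool (\<not> \<sigma> i \<and> \<sigma> j) :: real) = (\<lambda>\<sigma>. of_bool (\<sigma> j) - of_bool (\<sigma> i \<and> \<sigma> j))"
    by auto
  hence not_i: "cube_expect n \<nu> (\<lambda>\<sigma>. of_bool (\<not> \<sigma> i \<and> \<sigma> j)) = marg n \<nu> j True - P"
    unfolding P_def by (simp add: cube_expect_diff cube_expect_spin_indicator)
  have "tv_marg n (cond n \<nu> {i} (\<tau>(i := True))) (cond n \<nu> {i} (\<tau>(i := False))) j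
      = \<bar>P / m - (marg n \<nu> j True - P) / (1 - m)\<bar>"
    using pos by (simp add: tv_marg_distr sum_cond_single marg_cond_single not_i mF P_def m_def)
  also have "P / m - (marg n \<nu> j True - P) / (1 - m) = (P - m * marg n \<nu> j True) / (m * (1 - m))"
    using pos mF unfolding m_def by (simp add: field_simps)
  also have "P - m * marg n \<nu> j True = cube_cov n \<nu> (\<lambda>\<sigma>. of_bool (\<sigma> i)) (\<lambda>\<sigma>. of_bool (\<sigma> j))"
    unfolding cube_cov_def P_def m_def cube_expect_spin_indicator by (simp flip: of_bool_conj)
  also have "m * (1 - m) = cube_var n \<nu> (\<lambda>\<sigma>. of_bool (\<sigma> i))"
    unfolding cube_var_spin_indicator[OF distr] mF m_def ..
  finally show ?thesis .
qed

lemma spin_cov_div_var_le_infl: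
  assumes distr: "is_distr n \<nu>"
  shows "\<bar>cube_cov n \<nu> (\<lambda>\<sigma>. of_bool (\<sigma> i)) (\<lambda>\<sigma>. of_bool (\<sigma> j)) / cube_var n \<nu> (\<lambda>\<sigma>. of_bool (\<sigma> i))\<bar>
    \<le> infl n \<nu> {} \<tau> i j"
proof (cases "0 < marg n \<nu> i True \<and> 0 < marg n \<nu> i False")
  case True
  thus ?thesis
    using tv_marg_cond_le_infl[of n \<nu> "{}" \<tau> i True False j]
    by (simp add: tv_marg_cond_spin[OF distr] cond_empty[OF distr])
next
  case False
  hence var0: "cube_var n \<nu> (\<lambda>\<sigma>. of_bool (\<sigma> i)) = 0"
    using marg_nonneg[OF distr, of i] by (auto simp: cube_var_spin_indicator[OF distr] less_le)
  have "0 < marg n \<nu> i True \<or> 0 < marg n \<nu> i False"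
    using marg_True_add_False[of n \<nu> i] distr unfolding is_distr_def by linarith
  then obtain b where b: "0 < marg n \<nu> i b" by blast
  have "0 = tv_marg n (cond n \<nu> {i} (\<tau>(i := b))) (cond n \<nu> {i} (\<tau>(i := b))) j"
    by (simp add: tv_marg_def)
  also have "\<dots> \<le> infl n \<nu> {} \<tau> i j"
    using tv_marg_cond_le_infl[of n \<nu> "{}" \<tau> i b b j] b by (simp add: cond_empty[OF distr])
  finally show ?thesis by (simp add: var0)
qed

section \<open>Variance bounds from spectral independence\<close>

lemma spec_indep_variance_bound:
  assumes distr: "is_distr n \<nu>" and si: "spec_indep n \<eta> \<nu>" and "0 < \<eta>"
  shows "cube_var n \<nu> (\<lambda>\<sigma>. \<Sum>i<n. u i (\<sigma> i)) \<le> \<eta> * (\<Sum>i<n. cube_var n \<nu> (\<lambda>\<sigma>. u i (\<sigma> i)))"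
proof -
  define d where "d i = u i True - u i False" for i
  define C where "C i j = cube_cov n \<nu> (\<lambda>\<sigma>. of_bool (\<sigma> i)) (\<lambda>\<sigma>. of_bool (\<sigma> j))" for i j
  define V where "V i = C i i" for i
  define M where "M i j = C i j / V i" for i j
  have "(\<lambda>\<sigma>. u i (\<sigma> i)) = (\<lambda>\<sigma>. u i False + d i * of_bool (\<sigma> i))" for i
    by (auto simp: d_def fun_eq_iff)
  hence cov_spins: "cube_cov n \<nu> (\<lambda>\<sigma>. u i (\<sigma> i)) (\<lambda>\<sigma>. u j (\<sigma> j)) = d i * d j * C i j" for i j
    unfolding C_def by (simp add: cube_cov_affine[OF distr])
  have V_nonneg: "0 \<le> V i" for i
    unfolding V_def C_def by (rule cube_var_nonneg[OF distr])
  \<comment> \<open>When V i = 0 the junk value M i j = 0 is harmless: Cauchy-Schwarz forces C i j = 0.\<close>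
  have VM: "V i * M i j = C i j" for i j
  proof (cases "V i = 0")
    case True
    hence "C i j ^ 2 \<le> 0"
      using cube_cov_Cauchy_Schwarz[OF distr] unfolding V_def C_def by (metis mult_zero_left)
    thus ?thesis using True by (simp add: M_def)
  qed (simp add: M_def)
  have radius: "spectral_radius (complex_mat_of n (infl n \<nu> {} (\<lambda>_. False))) \<le> \<eta>"
    using si distr unfolding spec_indep_def infl_mat_def is_distr_def pinprob_def agrees_def by auto
  have "cube_var n \<nu> (\<lambda>\<sigma>. \<Sum>i<n. u i (\<sigma> i)) = (\<Sum>i<n. \<Sum>j<n. V i * d i * (M i j * d j))"
    by (simp add: cube_var_sum cov_spins flip: VM) (simp only: ac_simps)
  also have "\<dots> = weighted_dot n V d (matvec n M d)"
    by (simp add: weighted_dot_def matvec_def sum_distrib_left)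
  also have "\<dots> \<le> \<eta> * weighted_dot n V d d"
  proof (rule reversible_Rayleigh_le_spectral_radius[OF V_nonneg _ _ radius \<open>0 < \<eta>\<close>])
    show "V i * M i j = V j * M j i" for i j
      unfolding VM C_def by (rule cube_cov_commute)
    show "\<bar>M i j\<bar> \<le> infl n \<nu> {} (\<lambda>_. False) i j" for i j
      unfolding M_def V_def C_def by (rule spin_cov_div_var_le_infl[OF distr])
  qed
  also have "weighted_dot n V d d = (\<Sum>i<n. cube_var n \<nu> (\<lambda>\<sigma>. u i (\<sigma> i)))"
    by (simp add: weighted_dot_def cov_spins V_def ac_simps)
  finally show ?thesis .
qed

lemma spec_indep_second_moment_bound:
  assumes "is_distr n \<nu>" "spec_indep n \<eta> \<nu>" "0 < \<eta>" "0 \<le> \<alpha>" "\<alpha> * \<eta> \<le> 1"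
  shows "\<alpha> * cube_var n \<nu> (\<lambda>\<sigma>. \<Sum>i<n. u i (\<sigma> i)) \<le> (\<Sum>i<n. cube_expect n \<nu> (\<lambda>\<sigma>. (u i (\<sigma> i)) ^ 2))"
proof -
  let ?S = "\<Sum>i<n. cube_var n \<nu> (\<lambda>\<sigma>. u i (\<sigma> i))"
  have "0 \<le> ?S" using cube_var_nonneg[OF assms(1)] by (simp add: sum_nonneg)
  have "\<alpha> * cube_var n \<nu> (\<lambda>\<sigma>. \<Sum>i<n. u i (\<sigma> i)) \<le> \<alpha> * (\<eta> * ?S)"
    using spec_indep_variance_bound[OF assms(1-3)] assms(4) by (rule mult_left_mono)
  also have "\<dots> \<le> ?S"
    using mult_right_mono[OF assms(5) \<open>0 \<le> ?S\<close>] by (simp add: mult.assoc)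
  also have "\<dots> \<le> (\<Sum>i<n. cube_expect n \<nu> (\<lambda>\<sigma>. (u i (\<sigma> i)) ^ 2))"
    by (intro sum_mono) (simp add: cube_cov_def power2_eq_square)
  finally show ?thesis .
qed

section \<open>Log-concavity along an interpolation\<close>

lemma log_concave_critical_point_le:
  fixes P P1 P2 :: "real \<Rightarrow> real"
  assumes "a \<le> b"
    and P: "\<And>t. a \<le> t \<Longrightarrow> t \<le> b \<Longrightarrow> (P has_real_derivative P1 t) (at t)"
    and P1: "\<And>t. a \<le> t \<Longrightarrow> t \<le> b \<Longrightarrow> (P1 has_real_derivative P2 t) (at t)"
    and pos: "\<And>t. a \<le> t \<Longrightarrow> t \<le> b \<Longrightarrow> 0 < P t"
    and concave: "\<And>t. a \<le> t \<Longrightarrow> t \<le> b \<Longrightarrow> P2 t * P t \<le> (P1 t) ^ 2"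
    and critical: "P1 a = 0"
  shows "P b \<le> P a"
proof -
  have ratio: "P1 t / P t \<le> P1 a / P a" if "a \<le> t" "t \<le> b" for t
  proof (rule DERIV_nonpos_imp_nonincreasing[OF that(1)])
    fix u assume u: "a \<le> u" "u \<le> t"
    have "((\<lambda>t. P1 t / P t) has_real_derivative (P2 u * P u - P1 u * P1 u) / (P u * P u)) (at u)"
      using u that pos[of u] by (intro DERIV_divide P P1) auto
    moreover have "(P2 u * P u - P1 u * P1 u) / (P u * P u) \<le> 0"
      using concave[of u] u that by (intro divide_nonpos_nonneg) (auto simp: power2_eq_square)
    ultimately show "\<exists>y. ((\<lambda>t. P1 t / P t) has_real_derivative y) (at u) \<and> y \<le> 0" by blast
  qed
  show ?thesis
  proof (rule DERIV_nonpos_imp_nonincreasing[OF \<open>a \<le> b\<close>])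
    fix u assume u: "a \<le> u" "u \<le> b"
    have "P1 u \<le> 0"
      using ratio[OF u] critical pos[OF u] by (simp add: divide_le_0_iff)
    thus "\<exists>y. (P has_real_derivative y) (at u) \<and> y \<le> 0"
      using P[OF u] by blast
  qed
qed

lemma has_real_derivative_prod_powr:
  assumes "\<And>i. i \<in> I \<Longrightarrow> 0 < 1 + t * e i"
  shows "((\<lambda>t. \<Prod>i\<in>I. (1 + t * e i) powr \<alpha>) has_real_derivative
    (\<Prod>i\<in>I. (1 + t * e i) powr \<alpha>) * (\<alpha> * (\<Sum>i\<in>I. e i / (1 + t * e i)))) (at t)"
proof -
  have factor: "((\<lambda>t. (1 + t * e i) powr \<alpha>) has_real_derivative
      (1 + t * e i) powr \<alpha> * (\<alpha> * e i / (1 + t * e i))) (at t)" if "i \<in> I" for i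
    using assms[OF that]
    by (auto intro!: derivative_eq_intros simp: powr_diff field_simps)
  show ?thesis
  proof (rule DERIV_cong[OF has_field_derivative_prod'[OF _ factor]])
    show "(1 + t * e i) powr \<alpha> \<noteq> 0" if "i \<in> I" for i
      using assms[OF that] by simp
    show "(\<Prod>i\<in>I. (1 + t * e i) powr \<alpha>) *
        (\<Sum>i\<in>I. (1 + t * e i) powr \<alpha> * (\<alpha> * e i / (1 + t * e i)) / (1 + t * e i) powr \<alpha>)
      = (\<Prod>i\<in>I. (1 + t * e i) powr \<alpha>) * (\<alpha> * (\<Sum>i\<in>I. e i / (1 + t * e i)))"
      using assms by (auto simp: sum_distrib_left less_imp_neq[symmetric] intro!: sum.cong)
  qed
qed

lemma has_real_derivative_sum_log_derivative:
  assumes "\<And>i. i \<in> I \<Longrightarrow> 0 < 1 + t * e i"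
  shows "((\<lambda>t. \<Sum>i\<in>I. e i / (1 + t * e i)) has_real_derivative
    (- (\<Sum>i\<in>I. (e i / (1 + t * e i)) ^ 2))) (at t)"
proof -
  have "((\<lambda>t. e i / (1 + t * e i)) has_real_derivative (- ((e i / (1 + t * e i)) ^ 2))) (at t)"
    if "i \<in> I" for i
    using assms[OF that]
    by (auto intro!: derivative_eq_intros simp: power2_eq_square field_simps)
  thus ?thesis by (auto intro: DERIV_sum simp flip: sum_negf)
qed

lemma has_real_derivative_cube_expect_prod_powr:
  assumes "\<And>\<sigma> i. i < n \<Longrightarrow> 0 < 1 + t * e \<sigma> i"
  shows "((\<lambda>t. cube_expect n \<mu> (\<lambda>\<sigma>. \<Prod>i<n. (1 + t * e \<sigma> i) powr \<alpha>)) has_real_derivative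
    cube_expect n \<mu> (\<lambda>\<sigma>. (\<Prod>i<n. (1 + t * e \<sigma> i) powr \<alpha>) * (\<alpha> * (\<Sum>i<n. e \<sigma> i / (1 + t * e \<sigma> i)))))
    (at t)"
  unfolding cube_expect_def
  by (intro DERIV_sum DERIV_cmult has_real_derivative_prod_powr) (use assms in auto)

lemma has_real_derivative_cube_expect_prod_powr_times_log_derivative:
  assumes "\<And>\<sigma> i. i < n \<Longrightarrow> 0 < 1 + t * e \<sigma> i"
  shows "((\<lambda>t. cube_expect n \<mu> (\<lambda>\<sigma>. (\<Prod>i<n. (1 + t * e \<sigma> i) powr \<alpha>) * (\<alpha> * (\<Sum>i<n. e \<sigma> i / (1 + t * e \<sigma> i)))))
    has_real_derivative cube_expect n \<mu> (\<lambda>\<sigma>. (\<Prod>i<n. (1 + t * e \<sigma> i) powr \<alpha>) *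
      ((\<alpha> * (\<Sum>i<n. e \<sigma> i / (1 + t * e \<sigma> i))) ^ 2 - \<alpha> * (\<Sum>i<n. (e \<sigma> i / (1 + t * e \<sigma> i)) ^ 2))))
    (at t)"
  unfolding cube_expect_def
proof (intro DERIV_sum DERIV_cmult)
  fix \<sigma>
  show "((\<lambda>t. (\<Prod>i<n. (1 + t * e \<sigma> i) powr \<alpha>) * (\<alpha> * (\<Sum>i<n. e \<sigma> i / (1 + t * e \<sigma> i))))
    has_real_derivative (\<Prod>i<n. (1 + t * e \<sigma> i) powr \<alpha>) *
      ((\<alpha> * (\<Sum>i<n. e \<sigma> i / (1 + t * e \<sigma> i))) ^ 2 - \<alpha> * (\<Sum>i<n. (e \<sigma> i / (1 + t * e \<sigma> i)) ^ 2)))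
    (at t)"
    using assms
    by (intro DERIV_cong[OF DERIV_mult[OF has_real_derivative_prod_powr
          DERIV_cmult[OF has_real_derivative_sum_log_derivative]]])
      (auto simp: power2_eq_square algebra_simps)
qed

lemma cube_expect_pos:
  assumes "is_distr n \<mu>" "\<And>\<sigma>. \<sigma> \<in> cube n \<Longrightarrow> 0 < f \<sigma>"
  shows "0 < cube_expect n \<mu> f"
proof -
  have nonneg: "\<And>\<sigma>. \<sigma> \<in> cube n \<Longrightarrow> 0 \<le> \<mu> \<sigma>" and "(\<Sum>\<sigma>\<in>cube n. \<mu> \<sigma>) = 1"
    using assms(1) unfolding is_distr_def by auto
  then obtain \<sigma>0 where \<sigma>0: "\<sigma>0 \<in> cube n" "0 < \<mu> \<sigma>0"
    by (metis less_eq_real_def sum_nonneg_eq_0_iff finite_cube zero_neq_one)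
  have "\<mu> \<sigma>0 * f \<sigma>0 \<le> cube_expect n \<mu> f"
    unfolding cube_expect_def using nonneg assms(2)
    by (intro member_le_sum[OF \<sigma>0(1)]) (auto simp: finite_cube less_imp_le)
  moreover have "0 < \<mu> \<sigma>0 * f \<sigma>0" using \<sigma>0 assms(2) by simp
  ultimately show ?thesis by linarith
qed

lemma is_distr_tilt:
  assumes "is_distr n \<mu>" "\<And>i. i < n \<Longrightarrow> 0 < lam i"
  shows "is_distr n (tilt n lam \<mu>)"
proof -
  let ?L = "\<lambda>\<sigma>. \<Prod>i\<in>{i. i < n \<and> \<sigma> i}. lam i"
  have "0 < cube_expect n \<mu> ?L"
    using assms by (intro cube_expect_pos prod_pos) auto
  thus ?thesis
    using assms unfolding is_distr_def tilt_def cube_expect_def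
    by (auto intro!: divide_nonneg_nonneg mult_nonneg_nonneg prod_nonneg simp: less_imp_le
        simp flip: sum_divide_distrib)
qed

lemma cube_expect_tilt_ratio:
  assumes yb: "\<And>i. i < n \<Longrightarrow> yb i \<noteq> 0"
    and Z: "cube_expect n \<mu> (\<lambda>\<sigma>. \<Prod>i<n. if \<sigma> i then ya i else yb i) \<noteq> 0"
  shows "cube_expect n \<mu> (\<lambda>\<sigma>. (\<Prod>i<n. if \<sigma> i then ya i else yb i) * f \<sigma>)
    = cube_expect n \<mu> (\<lambda>\<sigma>. \<Prod>i<n. if \<sigma> i then ya i else yb i) * cube_expect n (tilt n (\<lambda>i. ya i / yb i) \<mu>) f"
proof -
  define K where "K = (\<Prod>i<n. yb i)"
  define L where "L \<sigma> = (\<Prod>i\<in>{i. i < n \<and> \<sigma> i}. ya i / yb i)" for \<sigma>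
  have split: "(\<Prod>i<n. if \<sigma> i then ya i else yb i) = K * L \<sigma>" for \<sigma>
  proof -
    have "(\<Prod>i<n. if \<sigma> i then ya i else yb i) = (\<Prod>i<n. yb i * (if \<sigma> i then ya i / yb i else 1))"
      using yb by (intro prod.cong) auto
    also have "\<dots> = K * L \<sigma>"
      unfolding K_def L_def prod.distrib by (simp add: prod.inter_filter[symmetric] Collect_conj_eq lessThan_def)
    finally show ?thesis .
  qed
  have "K \<noteq> 0" and ZL: "cube_expect n \<mu> L \<noteq> 0"
    using Z unfolding split cube_expect_cmult by auto
  have "cube_expect n (tilt n (\<lambda>i. ya i / yb i) \<mu>) f = cube_expect n \<mu> (\<lambda>\<sigma>. L \<sigma> * f \<sigma>) / cube_expect n \<mu> L"
    unfolding tilt_def cube_expect_def L_def by (simp add: sum_divide_distrib ac_simps)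
  thus ?thesis
    using ZL unfolding split by (simp add: cube_expect_cmult mult.assoc)
qed

lemma complete_spec_indep_log_concave:
  assumes distr: "is_distr n \<mu>" and csi: "complete_spec_indep n \<eta> \<epsilon> \<mu>"
    and "0 < \<eta>" "0 \<le> \<alpha>" "\<alpha> * \<eta> \<le> 1"
    and ya: "\<And>i. i < n \<Longrightarrow> 0 < ya i" and yb: "\<And>i. i < n \<Longrightarrow> 0 < yb i"
    and field: "\<And>i. i < n \<Longrightarrow> ya i / yb i \<le> 1 + \<epsilon>"
  defines "W \<equiv> \<lambda>\<sigma>. \<Prod>i<n. if \<sigma> i then ya i else yb i"
  shows "cube_expect n \<mu> (\<lambda>\<sigma>. W \<sigma> * ((\<alpha> * (\<Sum>i<n. u i (\<sigma> i))) ^ 2 - \<alpha> * (\<Sum>i<n. (u i (\<sigma> i)) ^ 2)))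
      * cube_expect n \<mu> W
    \<le> (cube_expect n \<mu> (\<lambda>\<sigma>. W \<sigma> * (\<alpha> * (\<Sum>i<n. u i (\<sigma> i))))) ^ 2"
proof -
  define \<nu> where "\<nu> = tilt n (\<lambda>i. ya i / yb i) \<mu>"
  define Z where "Z = cube_expect n \<mu> W"
  define U where "U \<sigma> = (\<Sum>i<n. u i (\<sigma> i))" for \<sigma>
  have lam: "0 < ya i / yb i" "ya i / yb i \<le> 1 + \<epsilon>" if "i < n" for i
    using ya[OF that] yb[OF that] field[OF that] by auto
  have "0 < Z"
    unfolding Z_def W_def using ya yb by (intro cube_expect_pos[OF distr] prod_pos) auto
  have \<nu>: "is_distr n \<nu>" "spec_indep n \<eta> \<nu>"
    using is_distr_tilt[OF distr] csi lam unfolding \<nu>_def complete_spec_indep_def by auto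
  have transfer: "cube_expect n \<mu> (\<lambda>\<sigma>. W \<sigma> * f \<sigma>) = Z * cube_expect n \<nu> f" for f
    unfolding W_def Z_def \<nu>_def
    using \<open>0 < Z\<close> by (intro cube_expect_tilt_ratio) (auto simp: Z_def W_def dest: yb)
  have "\<alpha> * (\<alpha> * cube_var n \<nu> U) \<le> \<alpha> * (\<Sum>i<n. cube_expect n \<nu> (\<lambda>\<sigma>. (u i (\<sigma> i)) ^ 2))"
    unfolding U_def using spec_indep_second_moment_bound[OF \<nu> assms(3-5)] assms(4)
    by (rule mult_left_mono)
  hence "Z\<^sup>2 * (\<alpha>\<^sup>2 * cube_expect n \<nu> (\<lambda>\<sigma>. (U \<sigma>)\<^sup>2) - \<alpha> * (\<Sum>i<n. cube_expect n \<nu> (\<lambda>\<sigma>. (u i (\<sigma> i))\<^sup>2)))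
      \<le> Z\<^sup>2 * (\<alpha> * cube_expect n \<nu> U)\<^sup>2"
    by (intro mult_left_mono) (auto simp: cube_cov_def power2_eq_square algebra_simps)
  thus ?thesis
    unfolding transfer Z_def[symmetric] U_def[symmetric]
    by (simp add: cube_expect_diff cube_expect_cmult cube_expect_sum power_mult_distrib
        power2_eq_square algebra_simps)
qed

lemma one_add_mult_pos:
  fixes c t :: real
  assumes "-1 < c" "0 \<le> t" "t \<le> 1"
  shows "0 < 1 + t * c"
proof -
  have "- t \<le> t * c"
    using mult_left_mono[of "-1" c t] assms by simp
  moreover have "- t < t * c \<or> t < 1"
    using assms by (cases "t = 1") auto
  ultimately show ?thesis
    using assms(3) by linarith
qed

lemma complete_spec_indep_interpolation:
  assumes distr: "is_distr n \<mu>" and csi: "complete_spec_indep n \<eta> \<epsilon> \<mu>"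
    and "0 < \<eta>" "0 \<le> \<alpha>" "\<alpha> * \<eta> \<le> 1"
    and gt: "\<And>i. i < n \<Longrightarrow> -1 < a i \<and> -1 < b i"
    and field: "\<And>i t. i < n \<Longrightarrow> 0 \<le> t \<Longrightarrow> t \<le> 1 \<Longrightarrow> ((1 + t * a i) / (1 + t * b i)) powr \<alpha> \<le> 1 + \<epsilon>"
    and centred: "(\<Sum>i<n. marg n \<mu> i True * a i + marg n \<mu> i False * b i) = 0"
  shows "cube_expect n \<mu> (\<lambda>\<sigma>. \<Prod>i<n. (1 + (if \<sigma> i then a i else b i)) powr \<alpha>) \<le> 1"
proof -
  define e where "e \<sigma> i = (if \<sigma> i then a i else b i)" for \<sigma> :: "nat \<Rightarrow> bool" and i
  define u where "u t i c = (if c then a i / (1 + t * a i) else b i / (1 + t * b i))" for t :: real and i c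
  define W where "W t \<sigma> = (\<Prod>i<n. (1 + t * e \<sigma> i) powr \<alpha>)" for t \<sigma>
  define P where "P t = cube_expect n \<mu> (W t)" for t
  define P1 where "P1 t = cube_expect n \<mu> (\<lambda>\<sigma>. W t \<sigma> * (\<alpha> * (\<Sum>i<n. u t i (\<sigma> i))))" for t
  define P2 where "P2 t = cube_expect n \<mu> (\<lambda>\<sigma>. W t \<sigma> *
    ((\<alpha> * (\<Sum>i<n. u t i (\<sigma> i))) ^ 2 - \<alpha> * (\<Sum>i<n. (u t i (\<sigma> i)) ^ 2)))" for t
  have e_pos: "0 < 1 + t * e \<sigma> i" if "i < n" "0 \<le> t" "t \<le> 1" for t \<sigma> i
    using gt[OF that(1)] one_add_mult_pos that unfolding e_def by auto
  have u_eq: "u t i (\<sigma> i) = e \<sigma> i / (1 + t * e \<sigma> i)" for t \<sigma> i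
    unfolding e_def u_def by simp
  have "P 1 \<le> P 0"
  proof (rule log_concave_critical_point_le[of 0 1 P P1 P2])
    show "(P has_real_derivative P1 t) (at t)" if "0 \<le> t" "t \<le> 1" for t
      unfolding P_def P1_def W_def u_eq using e_pos[OF _ that]
      by (rule has_real_derivative_cube_expect_prod_powr)
    show "(P1 has_real_derivative P2 t) (at t)" if "0 \<le> t" "t \<le> 1" for t
      unfolding P1_def P2_def W_def u_eq using e_pos[OF _ that]
      by (rule has_real_derivative_cube_expect_prod_powr_times_log_derivative)
    show "0 < P t" if "0 \<le> t" "t \<le> 1" for t
      unfolding P_def W_def using e_pos[OF _ that]
      by (intro cube_expect_pos[OF distr] prod_pos) (simp add: less_imp_neq[symmetric])
    show "P2 t * P t \<le> (P1 t) ^ 2" if "0 \<le> t" "t \<le> 1" for t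
    proof -
      have W_split: "W t = (\<lambda>\<sigma>. \<Prod>i<n. if \<sigma> i then (1 + t * a i) powr \<alpha> else (1 + t * b i) powr \<alpha>)"
        unfolding W_def e_def by (auto intro!: prod.cong)
      have factors_pos: "0 < 1 + t * a i" "0 < 1 + t * b i" if "i < n" for i
        using gt[OF that] one_add_mult_pos[OF _ \<open>0 \<le> t\<close> \<open>t \<le> 1\<close>] by auto
      show ?thesis
        unfolding P_def P1_def P2_def W_split
      proof (rule complete_spec_indep_log_concave[OF distr csi assms(3-5)])
        show "(1 + t * a i) powr \<alpha> / (1 + t * b i) powr \<alpha> \<le> 1 + \<epsilon>" if "i < n" for i
          using field[OF that \<open>0 \<le> t\<close> \<open>t \<le> 1\<close>] by (simp add: powr_divide)
      qed (use factors_pos in \<open>simp_all add: less_imp_neq[symmetric]\<close>)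
    qed
    show "P1 0 = 0"
      unfolding P1_def W_def u_def
      using centred by (simp add: cube_expect_cmult cube_expect_sum cube_expect_spin)
  qed simp
  moreover have "P 0 = 1"
    unfolding P_def W_def by (simp add: cube_expect_const[OF distr])
  ultimately show ?thesis
    unfolding P_def W_def e_def by simp
qed

section \<open>The normalised generating polynomial\<close>

lemma interpolated_ratio_le_max:
  fixes x s t :: real
  assumes "0 < x" "0 < s" "0 \<le> t" "t \<le> 1"
  shows "(1 + t * (x / s - 1)) / (1 + t * (1 / s - 1)) \<le> max 1 x"
proof -
  have den: "0 < (1 - t) * s + t"
    using assms by (cases "t = 1") (auto intro: add_pos_nonneg)
  have "(1 - t) * s \<le> max 1 x * ((1 - t) * s)"
    using assms mult_right_mono[of 1 "max 1 x" "(1 - t) * s"] by simp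
  moreover have "t * x \<le> max 1 x * t"
    using assms mult_left_mono[of x "max 1 x" t] by (simp add: mult.commute)
  ultimately have "(1 - t) * s + t * x \<le> max 1 x * ((1 - t) * s) + max 1 x * t"
    by (rule add_mono)
  hence "((1 - t) * s + t * x) / ((1 - t) * s + t) \<le> max 1 x"
    using den by (simp add: divide_le_eq algebra_simps)
  moreover have "1 + t * (x / s - 1) = ((1 - t) * s + t * x) / s" "1 + t * (1 / s - 1) = ((1 - t) * s + t) / s"
    using assms(2) by (simp_all add: field_simps)
  ultimately show ?thesis
    using assms(2) by simp
qed

lemma interpolated_ratio_powr_le:
  fixes x s t \<alpha> \<epsilon> :: real
  assumes "0 < x" "0 < s" "0 \<le> t" "t \<le> 1" "0 < \<alpha>" "0 \<le> \<epsilon>" "x \<le> (1 + \<epsilon>) powr (1 / \<alpha>)"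
  shows "((1 + t * (x / s - 1)) / (1 + t * (1 / s - 1))) powr \<alpha> \<le> 1 + \<epsilon>"
proof -
  have "1 \<le> (1 + \<epsilon>) powr (1 / \<alpha>)"
    using assms(5,6) by (simp add: ge_one_powr_ge_zero)
  hence "max 1 x \<le> (1 + \<epsilon>) powr (1 / \<alpha>)"
    using assms(7) by simp
  moreover have "0 < (1 + t * (x / s - 1)) / (1 + t * (1 / s - 1))"
    using assms(1-4) by (intro divide_pos_pos one_add_mult_pos) auto
  ultimately have "((1 + t * (x / s - 1)) / (1 + t * (1 / s - 1))) powr \<alpha> \<le> ((1 + \<epsilon>) powr (1 / \<alpha>)) powr \<alpha>"
    using interpolated_ratio_le_max[OF assms(1-4)] assms(5) by (intro powr_mono2) auto
  thus ?thesis
    using assms(5,6) by (simp add: powr_powr)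
qed

lemma gpoly_powr_div_prod_powr:
  "gpoly n \<mu> (\<lambda>i. x i powr \<alpha>) / (\<Prod>i<n. s i) powr \<alpha>
    = cube_expect n \<mu> (\<lambda>\<sigma>. \<Prod>i<n. (if \<sigma> i then x i / s i else 1 / s i) powr \<alpha>)"
proof -
  have "(\<Prod>i<n. (if \<sigma> i then x i / s i else 1 / s i) powr \<alpha>)
      = (\<Prod>i<n. (if \<sigma> i then x i powr \<alpha> else 1) / s i powr \<alpha>)" for \<sigma>
    by (intro prod.cong) (auto simp: powr_divide)
  also have "\<dots> \<sigma> = (\<Prod>i\<in>{i. i < n \<and> \<sigma> i}. x i powr \<alpha>) / (\<Prod>i<n. s i) powr \<alpha>" for \<sigma>
    by (simp add: prod_dividef prod_powr_distrib prod.inter_filter[symmetric] Collect_conj_eq lessThan_def)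
  finally show ?thesis
    unfolding cube_expect_def gpoly_def by (simp add: sum_divide_distrib)
qed

lemma marg_mixture_pos:
  assumes "is_distr n \<mu>" "0 < x"
  shows "0 < marg n \<mu> i True * x + marg n \<mu> i False"
proof (cases "marg n \<mu> i True = 0")
  case True
  thus ?thesis
    using marg_True_add_False[of n \<mu> i] assms(1) unfolding is_distr_def by simp
next
  case False
  hence "0 < marg n \<mu> i True * x"
    using marg_nonneg[OF assms(1), of i True] assms(2) by simp
  thus ?thesis using marg_nonneg[OF assms(1), of i False] by simp
qed

lemma gpoly_powr_le_prod_marg:
  assumes distr: "is_distr n \<mu>" and csi: "complete_spec_indep n \<eta> \<epsilon> \<mu>"
    and "0 < \<eta>" "0 < \<alpha>" "\<alpha> * \<eta> \<le> 1" "0 \<le> \<epsilon>"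
    and x: "\<And>i. i < n \<Longrightarrow> 0 < x i \<and> x i \<le> (1 + \<epsilon>) powr (1 / \<alpha>)"
  shows "gpoly n \<mu> (\<lambda>i. x i powr \<alpha>) \<le> (\<Prod>i<n. marg n \<mu> i True * x i + marg n \<mu> i False) powr \<alpha>"
proof -
  define s where "s i = marg n \<mu> i True * x i + marg n \<mu> i False" for i
  have s_pos: "0 < s i" if "i < n" for i
    unfolding s_def using x[OF that] by (intro marg_mixture_pos[OF distr]) auto
  have centred: "marg n \<mu> i True * (x i / s i - 1) + marg n \<mu> i False * (1 / s i - 1) = 0" if "i < n" for i
  proof -
    have "marg n \<mu> i True * (x i / s i - 1) + marg n \<mu> i False * (1 / s i - 1)
        = (marg n \<mu> i True * x i + marg n \<mu> i False) / s i - (marg n \<mu> i True + marg n \<mu> i False)"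
      by (simp add: add_divide_distrib algebra_simps)
    thus ?thesis
      using marg_True_add_False[of n \<mu> i] distr s_pos[OF that] unfolding is_distr_def
      by (simp flip: s_def)
  qed
  have "cube_expect n \<mu> (\<lambda>\<sigma>. \<Prod>i<n. (1 + (if \<sigma> i then x i / s i - 1 else 1 / s i - 1)) powr \<alpha>) \<le> 1"
    using s_pos x assms(4,6) centred
    by (intro complete_spec_indep_interpolation[OF distr csi assms(3) _ assms(5)] interpolated_ratio_powr_le)
      auto
  moreover have "1 + (if c then x i / s i - 1 else 1 / s i - 1) = (if c then x i / s i else 1 / s i)" for c i
    by simp
  ultimately have "gpoly n \<mu> (\<lambda>i. x i powr \<alpha>) / (\<Prod>i<n. s i) powr \<alpha> \<le> 1"
    unfolding gpoly_powr_div_prod_powr by simp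
  moreover have "0 < (\<Prod>i<n. s i)"
    using s_pos by (intro prod_pos) auto
  hence "0 < (\<Prod>i<n. s i) powr \<alpha>"
    unfolding powr_gt_zero by (rule less_imp_neq[symmetric])
  ultimately show ?thesis
    unfolding s_def by (simp add: divide_le_eq_1)
qed

theorem lemma5p2:
  fixes n :: nat and \<mu> :: "(nat \<Rightarrow> bool) \<Rightarrow> real" and \<eta> \<epsilon> \<alpha> :: real and x :: "nat \<Rightarrow> real"
  assumes "\<eta> > 1" and "\<epsilon> > 0"
    and "is_distr n \<mu>"
    and "complete_spec_indep n \<eta> \<epsilon> \<mu>"
    and "0 < \<alpha>" and "\<alpha> \<le> 1 / (2 * \<eta>)"
    and "\<forall>i<n. 0 < x i \<and> x i \<le> (1 + \<epsilon>) powr (1 / \<alpha>)"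
  shows "Ffun n \<mu> \<alpha> x \<le> 1"
proof -
  define S where "S = (\<Prod>i<n. marg n \<mu> i True * x i + marg n \<mu> i False)"
  have "\<alpha> * \<eta> \<le> 1"
    using assms(1,6) by (simp add: field_simps)
  hence "gpoly n \<mu> (\<lambda>i. x i powr \<alpha>) \<le> S powr \<alpha>"
    unfolding S_def using assms by (intro gpoly_powr_le_prod_marg) auto
  moreover have "0 \<le> gpoly n \<mu> (\<lambda>i. x i powr \<alpha>)"
    using assms(3) unfolding gpoly_def is_distr_def by (auto intro!: sum_nonneg mult_nonneg_nonneg prod_nonneg)
  ultimately have "gpoly n \<mu> (\<lambda>i. x i powr \<alpha>) powr (1 / \<alpha>) \<le> (S powr \<alpha>) powr (1 / \<alpha>)"
    using assms(5) by (intro powr_mono2) auto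
  moreover have "0 < S"
    unfolding S_def using assms(3,7) by (intro prod_pos marg_mixture_pos) auto
  ultimately show ?thesis
    unfolding Ffun_def S_def[symmetric] using assms(5) by (simp add: powr_powr)
qed

end
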